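(* Let $m\ge 1$ and $r\ge 0$ be integers, let $n$ be a positive integer and let $x$ be a real number. Then \[ {\sum}^{2r}(x+n)^{2m}=\sum_{k=1}^m T(2m,2k)\left\{\frac{(x+n+r)(x+n+k+2r-1)_{2k+2r-1}}{(2k+2r)_{2r}}-\sum_{i=1}^{2r}\binom{n+2r-i-1}{2r-i}\frac{(2x+i)(x+k+i-1)_{2k+i-1}}{2(2k+i)_i}\right\}. \]
   Context: $(y)_k=y(y-1)\cdots(y-k+1)$ is the lower factorial ($(y)_0=1$). The $r$-fold sum is defined by ${\sum}^0 f(n)=f(n)$ and ${\sum}^r f(n)={\sum}^{r-1}f(1)+{\sum}^{r-1}f(2)+\cdots+{\sum}^{r-1}f(n)$; equivalently ${\sum}^r f(n)=\sum_{1\le i_1\le\cdots\le i_r\le n} f(i_1)$, here with $f(n)=(x+n)^{2m}$. The central factorials are $y^{[k]}=y\,(y+k/2-1)_{k-1}$ for $k\ge1$, and the central factorial numbers $T(m,k)$ are the coefficients determined by $y^m=\sum_{k=1}^m T(m,k)\,y^{[k]}$ for all $y$ and $m\ge 1$. *)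

theory Defs
  imports Complex_Main
begin

definition lfact :: "real \<Rightarrow> nat \<Rightarrow> real" where
  "lfact y k = (\<Prod>i<k. y - real i)"

fun rsum :: "nat \<Rightarrow> (nat \<Rightarrow> real) \<Rightarrow> nat \<Rightarrow> real" where
  "rsum 0 f n = f n"
| "rsum (Suc r) f n = (\<Sum>j=1..n. rsum r f j)"

definition cfact :: "real \<Rightarrow> nat \<Rightarrow> real" where
  "cfact y k = y * lfact (y + real k / 2 - 1) (k - 1)"

definition cfnum :: "nat \<Rightarrow> nat \<Rightarrow> real" where
  "cfnum m = (THE c. (\<forall>y::real. y ^ m = (\<Sum>k=1..m. c k * cfact y k))
                     \<and> (\<forall>k. (k = 0 \<or> k > m) \<longrightarrow> c k = 0))"

end

theory Submission
  imports Defs "HOL-Computational_Algebra.Polynomial"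
begin

text \<open>Central factorials behave under the central difference like powers under differentiation:
  \<open>(y+1/2)\<^bsup>[K+1]\<^esup> - (y-1/2)\<^bsup>[K+1]\<^esup> = (K+1) y\<^bsup>[K]\<^esup>\<close>. Hence
  \<open>y \<mapsto> (y+s/2)\<^bsup>[K+s]\<^esup> / (K+s)\<^sub>s\<close> is an \<open>s\<close>-fold antidifference of \<open>y\<^bsup>[K]\<^esup>\<close>, and
  iterating the sum \<open>s\<close> times leaves this antidifference at \<open>x+n\<close> minus boundary terms at \<open>x\<close>,
  whose multiplicities are hockey-stick binomial coefficients. The identity
  \<open>y\<^sup>2 y\<^bsup>[K]\<^esup> = y\<^bsup>[K+2]\<^esup> + (K/2)\<^sup>2 y\<^bsup>[K]\<^esup>\<close> expands \<open>y\<^bsup>2m\<^esup>\<close> in the even central factorials;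
  the coefficients are the \<open>T(2m,2k)\<close> because central factorials are monic polynomials of
  distinct degrees. Linearity of the iterated sum then gives the formula with \<open>s = 2r\<close>.\<close>

lemma lfact_Suc: "lfact a (Suc k) = lfact a k * (a - real k)"
  by (simp add: lfact_def)

lemma lfact_Suc_shift: "lfact a (Suc k) = a * lfact (a - 1) k"
  unfolding lfact_def prod.lessThan_Suc_shift by (simp add: algebra_simps)

text \<open>The hypothesis \<open>K \<ge> 1\<close> here and below is needed because \<open>cfact y 0 = y\<close>, not \<open>1\<close>.\<close>

lemma cfact_central_diff:
  assumes "K \<ge> 1"
  shows "cfact (y + 1/2) (Suc K) - cfact (y - 1/2) (Suc K) = real (Suc K) * cfact y K"
proof -
  obtain L where K: "K = Suc L" using assms by (cases K) auto
  define z where "z = y + real K / 2"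
  define P where "P = lfact (z - 1) L"
  have "cfact (y + 1/2) (Suc K) = (y + 1/2) * lfact z K"
    by (simp add: cfact_def z_def add_divide_distrib)
  also have "\<dots> = (y + 1/2) * (z * P)"
    by (simp add: K P_def lfact_Suc_shift)
  finally have plus: "cfact (y + 1/2) (Suc K) = (y + 1/2) * (z * P)" .
  have "cfact (y - 1/2) (Suc K) = (y - 1/2) * lfact (z - 1) K"
    by (simp add: cfact_def z_def add_divide_distrib)
  also have "\<dots> = (y - 1/2) * (P * (z - 1 - real L))"
    by (simp add: K P_def lfact_Suc)
  finally have minus: "cfact (y - 1/2) (Suc K) = (y - 1/2) * (P * (z - 1 - real L))" .
  have "cfact y K = y * P"
    by (simp add: cfact_def P_def z_def K)
  with plus minus show ?thesis
    by (simp add: z_def K field_simps)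
qed

lemma cfact_mult_square:
  assumes "K \<ge> 1"
  shows "y\<^sup>2 * cfact y K = cfact y (K + 2) + (real K / 2)\<^sup>2 * cfact y K"
proof -
  obtain L where K: "K = Suc L" using assms by (cases K) auto
  define z where "z = y + real K / 2"
  define P where "P = lfact (z - 1) L"
  have "cfact y (K + 2) = y * lfact z (Suc K)"
    by (simp add: cfact_def z_def add_divide_distrib)
  also have "\<dots> = y * (z * (P * (z - 1 - real L)))"
    unfolding K by (subst lfact_Suc_shift) (simp add: P_def lfact_Suc)
  finally have "cfact y (K + 2) = y * (z * (P * (z - 1 - real L)))" .
  moreover have "cfact y K = y * P"
    by (simp add: cfact_def P_def z_def K)
  ultimately show ?thesis
    by (simp add: z_def K field_simps power2_eq_square)
qed

definition cfact_antidiff :: "real \<Rightarrow> nat \<Rightarrow> nat \<Rightarrow> real" where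
  "cfact_antidiff y K s = cfact (y + real s / 2) (K + s) / lfact (real (K + s)) s"

lemma cfact_antidiff_0 [simp]: "cfact_antidiff y K 0 = cfact y K"
  by (simp add: cfact_antidiff_def lfact_def)

lemma cfact_antidiff_diff:
  assumes "K \<ge> 1"
  shows "cfact_antidiff (y + 1) K (Suc s) - cfact_antidiff y K (Suc s) = cfact_antidiff (y + 1) K s"
proof -
  define z where "z = y + 1 + real s / 2"
  have shifts: "z + 1/2 = y + 1 + real (Suc s) / 2" "z - 1/2 = y + real (Suc s) / 2"
    by (simp_all add: z_def field_simps)
  have "cfact (y + 1 + real (Suc s) / 2) (Suc (K + s)) - cfact (y + real (Suc s) / 2) (Suc (K + s))
      = real (Suc (K + s)) * cfact z (K + s)"
    using cfact_central_diff[of "K + s" z] assms unfolding shifts by simp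
  moreover have "lfact (real (Suc (K + s))) (Suc s) = real (Suc (K + s)) * lfact (real (K + s)) s"
    by (simp add: lfact_Suc_shift)
  ultimately show ?thesis
    unfolding cfact_antidiff_def add_Suc_right diff_divide_distrib[symmetric]
    by (simp add: z_def del: of_nat_Suc)
qed

lemma sum_cfact_antidiff:
  assumes "K \<ge> 1"
  shows "(\<Sum>j=1..n. cfact_antidiff (x + real j) K s)
           = cfact_antidiff (x + real n) K (Suc s) - cfact_antidiff x K (Suc s)"
proof (induction n)
  case (Suc n)
  with cfact_antidiff_diff[OF assms, of "x + real n" s] show ?case
    by (simp add: algebra_simps)
qed simp

lemma cfact_antidiff_even:
  "cfact_antidiff y (2*k) s
     = (y + real s / 2) * lfact (y + real k + real s - 1) (2*k + s - 1) / lfact (real (2*k + s)) s"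
proof -
  have "y + real s / 2 + real (2*k + s) / 2 - 1 = y + real k + real s - 1"
    by (simp add: field_simps)
  then show ?thesis
    by (simp only: cfact_antidiff_def cfact_def)
qed

lemma sum_choose_shift: "(\<Sum>j=1..n. (j - 1 + a) choose a) = (n + a) choose Suc a"
  by (induction n) (auto simp: add.commute)

lemma rsum_linear:
  assumes "finite A"
  shows "rsum r (\<lambda>j. \<Sum>k\<in>A. c k * f k j) n = (\<Sum>k\<in>A. c k * rsum r (f k) n)"
proof (induction r arbitrary: n)
  case (Suc r)
  then have "rsum (Suc r) (\<lambda>j. \<Sum>k\<in>A. c k * f k j) n = (\<Sum>j=1..n. \<Sum>k\<in>A. c k * rsum r (f k) j)"
    by simp
  also have "\<dots> = (\<Sum>k\<in>A. c k * rsum (Suc r) (f k) n)"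
    by (subst sum.swap) (simp add: sum_distrib_left)
  finally show ?case .
qed simp

lemma rsum_cfact:
  assumes "K \<ge> 1"
  shows "rsum s (\<lambda>j. cfact (x + real j) K) n = cfact_antidiff (x + real n) K s
           - (\<Sum>i=1..s. real ((n + s - i - 1) choose (s - i)) * cfact_antidiff x K i)"
proof (induction s arbitrary: n)
  case (Suc s)
  define A where "A i = cfact_antidiff x K i" for i
  have hockey: "(\<Sum>j=1..n. real ((j + s - i - 1) choose (s - i))) = real ((n + Suc s - i - 1) choose (Suc s - i))"
    if "i \<le> s" for i
  proof -
    have "(\<Sum>j=1..n. (j + s - i - 1) choose (s - i)) = (\<Sum>j=1..n. (j - 1 + (s - i)) choose (s - i))"
      using that by (intro sum.cong) auto
    also have "\<dots> = (n + Suc s - i - 1) choose (Suc s - i)"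
      unfolding sum_choose_shift using that by (simp add: Suc_diff_le)
    finally show ?thesis
      by (metis of_nat_sum)
  qed
  have "rsum (Suc s) (\<lambda>j. cfact (x + real j) K) n
      = (\<Sum>j=1..n. cfact_antidiff (x + real j) K s - (\<Sum>i=1..s. real ((j + s - i - 1) choose (s - i)) * A i))"
    by (simp add: Suc.IH A_def)
  also have "\<dots> = (\<Sum>j=1..n. cfact_antidiff (x + real j) K s)
      - (\<Sum>i=1..s. (\<Sum>j=1..n. real ((j + s - i - 1) choose (s - i))) * A i)"
    unfolding sum_subtractf sum_distrib_right by (subst sum.swap) (rule refl)
  also have "\<dots> = cfact_antidiff (x + real n) K (Suc s) - A (Suc s)
      - (\<Sum>i=1..s. real ((n + Suc s - i - 1) choose (Suc s - i)) * A i)"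
    unfolding sum_cfact_antidiff[OF assms] A_def
    by (intro arg_cong2[where f = "(-)"] refl sum.cong) (simp_all only: atLeastAtMost_iff hockey)
  also have "\<dots> = cfact_antidiff (x + real n) K (Suc s)
      - (\<Sum>i=1..Suc s. real ((n + Suc s - i - 1) choose (Suc s - i)) * A i)"
    by simp
  finally show ?case
    by (simp only: A_def)
qed simp

fun cfeven :: "nat \<Rightarrow> nat \<Rightarrow> real" where
  "cfeven 0 k = (if k = 0 then 1 else 0)"
| "cfeven (Suc m) k = (if k = 0 then 0 else cfeven m (k - 1) + (real k)\<^sup>2 * cfeven m k)"

lemma cfeven_eq_0_above: "m < k \<Longrightarrow> cfeven m k = 0"
  by (induction m arbitrary: k) auto

lemma power_even_cfact_expansion:
  assumes "m \<ge> 1"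
  shows "y ^ (2*m) = (\<Sum>k=1..m. cfeven m k * cfact y (2*k))"
proof -
  from assms have "m > 0" by simp
  then show ?thesis
  proof (induction m rule: nat_induct_non_zero)
    case 1
    show ?case
      by (simp add: cfact_def lfact_def power2_eq_square)
  next
    case (Suc m)
    define E where "E k = cfact y (2*k)" for k
    have square: "y\<^sup>2 * E k = E (Suc k) + (real k)\<^sup>2 * E k" if "k \<ge> 1" for k
      using cfact_mult_square[of "2*k" y] that by (simp add: E_def)
    have "y ^ (2 * Suc m) = y\<^sup>2 * y ^ (2*m)"
      by (simp flip: power_add)
    also have "\<dots> = (\<Sum>k=1..m. cfeven m k * (y\<^sup>2 * E k))"
      unfolding Suc.IH sum_distrib_left E_def by (simp add: algebra_simps)
    also have "\<dots> = (\<Sum>k=1..m. cfeven m k * (E (Suc k) + (real k)\<^sup>2 * E k))"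
      by (intro sum.cong refl) (simp add: square)
    also have "\<dots> = (\<Sum>k=1..m. cfeven m k * E (Suc k)) + (\<Sum>k=1..m. (real k)\<^sup>2 * cfeven m k * E k)"
      by (simp add: sum.distrib algebra_simps)
    also have "\<dots> = (\<Sum>k=1..Suc m. cfeven m (k - 1) * E k) + (\<Sum>k=1..Suc m. (real k)\<^sup>2 * cfeven m k * E k)"
    proof -
      have "(\<Sum>k=1..Suc m. cfeven m (k - 1) * E k) = (\<Sum>k=Suc 1..Suc m. cfeven m (k - 1) * E k)"
        using \<open>m > 0\<close> by (cases m) (simp_all add: sum.atLeast_Suc_atMost)
      also have "\<dots> = (\<Sum>k=1..m. cfeven m k * E (Suc k))"
        by (simp only: sum.shift_bounds_cl_Suc_ivl diff_Suc_1)
      finally show ?thesis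
        by (simp add: cfeven_eq_0_above)
    qed
    also have "\<dots> = (\<Sum>k=1..Suc m. cfeven (Suc m) k * E k)"
      unfolding sum.distrib[symmetric] by (intro sum.cong refl) (simp add: algebra_simps)
    finally show ?case
      by (simp only: E_def)
  qed
qed

definition cfact_poly :: "nat \<Rightarrow> real poly" where
  "cfact_poly k = [:0, 1:] * (\<Prod>i<k - 1. [:real k / 2 - 1 - real i, 1:])"

lemma poly_cfact_poly [simp]: "poly (cfact_poly k) y = cfact y k"
  by (simp add: cfact_poly_def cfact_def lfact_def poly_prod algebra_simps)

lemma degree_cfact_poly:
  assumes "k \<ge> 1"
  shows "degree (cfact_poly k) = k"
proof -
  have "degree (\<Prod>i<k - 1. [:real k / 2 - 1 - real i, 1:]) = k - 1"
    by (subst degree_prod_eq_sum_degree) auto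
  moreover have "(\<Prod>i<k - 1. [:real k / 2 - 1 - real i, 1:]) \<noteq> 0"
    by (simp add: prod_zero_iff)
  ultimately show ?thesis
    using assms by (simp add: cfact_poly_def degree_mult_eq)
qed

lemma coeff_cfact_poly_self:
  assumes "k \<ge> 1"
  shows "coeff (cfact_poly k) k = 1"
proof -
  have "lead_coeff (cfact_poly k) = 1"
    by (simp add: cfact_poly_def lead_coeff_mult lead_coeff_prod)
  with degree_cfact_poly[OF assms] show ?thesis
    by simp
qed

lemma cfact_linear_independent:
  assumes "\<forall>y. (\<Sum>k=1..M. c k * cfact y k) = 0" and "k \<in> {1..M}"
  shows "c k = 0"
  using assms
proof (induction M)
  case (Suc M)
  define p where "p = (\<Sum>j=1..Suc M. smult (c j) (cfact_poly j))"
  have "poly p = poly 0"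
    using Suc.prems(1) by (simp add: p_def poly_sum fun_eq_iff)
  then have "p = 0"
    by (simp only: poly_eq_poly_eq_iff)
  moreover have "coeff p (Suc M) = c (Suc M)"
  proof -
    have "coeff (cfact_poly j) (Suc M) = 0" if "j \<in> {1..M}" for j
      using that by (intro coeff_eq_0) (simp add: degree_cfact_poly)
    then show ?thesis
      by (simp add: p_def coeff_sum coeff_cfact_poly_self)
  qed
  ultimately have top: "c (Suc M) = 0"
    by simp
  with Suc.prems(1) have "\<forall>y. (\<Sum>j=1..M. c j * cfact y j) = 0"
    by simp
  with Suc.IH top Suc.prems(2) show ?case
    by (cases "k = Suc M") auto
qed simp

lemma cfnum_eqI:
  assumes "\<And>y. y ^ m = (\<Sum>k=1..m. c k * cfact y k)" and "\<And>k. k = 0 \<or> k > m \<Longrightarrow> c k = 0"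
  shows "cfnum m = c"
  unfolding cfnum_def
proof (rule the_equality)
  show "(\<forall>y. y ^ m = (\<Sum>k=1..m. c k * cfact y k)) \<and> (\<forall>k. (k = 0 \<or> k > m) \<longrightarrow> c k = 0)"
    using assms by blast
next
  fix d
  assume d: "(\<forall>y::real. y ^ m = (\<Sum>k=1..m. d k * cfact y k)) \<and> (\<forall>k. (k = 0 \<or> k > m) \<longrightarrow> d k = 0)"
  show "d = c"
  proof
    fix k
    show "d k = c k"
    proof (cases "k \<in> {1..m}")
      case True
      have "\<forall>y. (\<Sum>k=1..m. (d k - c k) * cfact y k) = 0"
        using d assms(1) by (simp add: left_diff_distrib sum_subtractf)
      from cfact_linear_independent[OF this True] show ?thesis
        by simp
    next
      case False
      then have "k = 0 \<or> k > m"
        by auto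
      with d assms(2) show ?thesis
        by metis
    qed
  qed
qed

lemma cfnum_even:
  assumes "m \<ge> 1"
  shows "cfnum (2*m) (2*k) = cfeven m k"
proof -
  define c where "c j = (if even j then cfeven m (j div 2) else 0)" for j
  have "cfnum (2*m) = c"
  proof (rule cfnum_eqI)
    fix y :: real
    have "y ^ (2*m) = (\<Sum>k=1..m. c (2*k) * cfact y (2*k))"
      using power_even_cfact_expansion[OF assms] by (simp add: c_def)
    also have "\<dots> = (\<Sum>j\<in>(*) 2 ` {1..m}. c j * cfact y j)"
      by (subst sum.reindex) (auto simp: inj_on_def)
    also have "\<dots> = (\<Sum>j=1..2*m. c j * cfact y j)"
      by (intro sum.mono_neutral_left) (auto simp: c_def)
    finally show "y ^ (2*m) = (\<Sum>j=1..2*m. c j * cfact y j)" .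
  next
    fix j :: nat
    assume "j = 0 \<or> j > 2*m"
    with assms show "c j = 0"
      by (cases m) (auto simp: c_def cfeven_eq_0_above elim!: evenE)
  qed
  then show ?thesis
    by (simp add: c_def)
qed

theorem mainTheorem4:
  fixes m r n :: nat and x :: real
  assumes "m \<ge> 1" and "n \<ge> 1"
  shows "rsum (2*r) (\<lambda>j. (x + real j) ^ (2*m)) n =
    (\<Sum>k=1..m. cfnum (2*m) (2*k) *
       ((x + real n + real r) * lfact (x + real n + real k + 2 * real r - 1) (2*k + 2*r - 1)
          / lfact (real (2*k + 2*r)) (2*r)
        - (\<Sum>i=1..2*r. real ((n + 2*r - i - 1) choose (2*r - i)) *
             ((2*x + real i) * lfact (x + real k + real i - 1) (2*k + i - 1))
             / (2 * lfact (real (2*k + i)) i))))"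
proof -
  have expansion: "(\<lambda>j. (x + real j) ^ (2*m)) = (\<lambda>j. \<Sum>k\<in>{1..m}. cfnum (2*m) (2*k) * cfact (x + real j) (2*k))"
    using power_even_cfact_expansion[OF assms(1)] by (simp add: cfnum_even[OF assms(1)])
  have upper_term: "cfact_antidiff (x + real n) (2*k) (2*r)
      = (x + real n + real r) * lfact (x + real n + real k + 2 * real r - 1) (2*k + 2*r - 1)
          / lfact (real (2*k + 2*r)) (2*r)" for k
    by (simp add: cfact_antidiff_even add.assoc)
  have boundary_term: "cfact_antidiff x (2*k) i
      = (2*x + real i) * lfact (x + real k + real i - 1) (2*k + i - 1) / (2 * lfact (real (2*k + i)) i)" for k i
    unfolding cfact_antidiff_even by (simp add: field_simps)
  have "rsum (2*r) (\<lambda>j. (x + real j) ^ (2*m)) n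
      = (\<Sum>k=1..m. cfnum (2*m) (2*k) * rsum (2*r) (\<lambda>j. cfact (x + real j) (2*k)) n)"
    unfolding expansion by (rule rsum_linear) simp
  also have "\<dots> = (\<Sum>k=1..m. cfnum (2*m) (2*k) *
       (cfact_antidiff (x + real n) (2*k) (2*r)
        - (\<Sum>i=1..2*r. real ((n + 2*r - i - 1) choose (2*r - i)) * cfact_antidiff x (2*k) i)))"
    by (intro sum.cong refl) (simp add: rsum_cfact)
  finally show ?thesis
    by (simp only: upper_term boundary_term times_divide_eq_right)
qed

end
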